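(* Let $((G_n)_{n\in\mathbb{N}},(\rho_n)_{n\in\mathbb{N}},(\kappa_k^n)_{k\le n})$ be a diverse $d$-ary cloning system, and let $n_0\in\mathbb{N}$ be such that $\bigcap_{k=1}^n\mathrm{Im}\,\kappa_k^n=\{1\}$ for all $n\ge n_0$. Let $x\in\mathscr{T}_d(G_* )$. If $x^{-1}[T,U]x\in F_d$ for all $d$-ary trees $T,U$ having the same number of leaves, that number being at least $n_0$, then $x\in F_d$.
   Context: Fix an integer $d\ge 2$. A $d$-ary tree is a finite rooted tree in which each non-leaf vertex has exactly $d$ ordered children; its leaves are numbered $1,\dots,n$ from left to right, and $n(T)$ is the number of leaves. For $1\le k\le n(T)$, $T_k$ denotes the tree obtained from $T$ by attaching a $d$-ary caret to the $k$-th leaf. Standard cloning maps: for $\sigma\in S_n$, $1\le k\le n$, partition $\{1,\dots,n+d-1\}$ into consecutive blocks $B^{(k)}_j=\{j\}$ ($j<k$), $B^{(k)}_k=\{k,\dots,k+d-1\}$, $B^{(k)}_j=\{j+d-1\}$ ($j>k$); $(\sigma)\varsigma_k^n\in S_{n+d-1}$ maps $B^{(k)}_j$ onto $B^{(\sigma(k))}_{\sigma(j)}$ preserving order. A $d$-ary cloning system consists of groups $(G_n)$, homomorphisms $\rho_n:G_n\to S_n$ and injective functions $\kappa_k^n:G_n\to G_{n+d-1}$ ($1\le k\le n$), written on the right with $(g)(\kappa\circ\kappa'):=((g)\kappa)\kappa'$, such that for $1\le k<\ell\le n$, $g,h\in G_n$: (C1) $(gh)\kappa_k^n=(g)\kappa^n_{\rho_n(h)k}(h)\kappa_k^n$;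 (C2) $\kappa_\ell^n\circ\kappa_k^{n+d-1}=\kappa_k^n\circ\kappa_{\ell+d-1}^{n+d-1}$; (C3) $\rho_{n+d-1}((g)\kappa_k^n)(i)=((\rho_n(g))\varsigma_k^n)(i)$ for $i\notin\{k,\dots,k+d-1\}$. $\mathscr{T}_d(G_* )$ is the group of classes $[T,g,U]$ ($T,U$ $d$-ary trees with $n$ leaves, $g\in G_n$) under the equivalence generated by $(T,g,U)\sim(T_{\rho_n(g)(k)},(g)\kappa_k^n,U_k)$, with product $[T,g,U][U,h,W]=[T,gh,W]$. We write $[T,U]=[T,1,U]$; these elements form the subgroup $F_d$ (the Higman–Thompson group). The system is diverse if some $n_0$ satisfies $\bigcap_{k=1}^n\mathrm{Im}\,\kappa_k^n=\{1\}$ for all $n\ge n_0$. *)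

theory Defs
  imports "HOL-Algebra.Sym_Groups"
begin

datatype tree = Lf | Nd "tree list"

fun dary :: "nat \<Rightarrow> tree \<Rightarrow> bool" where
  "dary d Lf = True"
| "dary d (Nd ts) = (length ts = d \<and> (\<forall>t\<in>set ts. dary d t))"

fun leaves :: "tree \<Rightarrow> nat" where
  "leaves Lf = 1"
| "leaves (Nd ts) = sum_list (map leaves ts)"

text \<open>Attach a d-ary caret to the k-th leaf (leaves numbered from 1, left to right).\<close>
fun add_caret :: "nat \<Rightarrow> nat \<Rightarrow> tree \<Rightarrow> tree"
and add_caret_list :: "nat \<Rightarrow> nat \<Rightarrow> tree list \<Rightarrow> tree list" where
  "add_caret d k Lf = (if k = 1 then Nd (replicate d Lf) else Lf)"
| "add_caret d k (Nd ts) = Nd (add_caret_list d k ts)"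
| "add_caret_list d k [] = []"
| "add_caret_list d k (t # ts) =
     (if k \<le> leaves t then add_caret d k t # ts
      else t # add_caret_list d (k - leaves t) ts)"

text \<open>Index of the block B^(k)_j containing position i of {1..n+d-1}.\<close>
definition blk :: "nat \<Rightarrow> nat \<Rightarrow> nat \<Rightarrow> nat" where
  "blk d k i = (if i < k then i else if i < k + d then k else i - (d - 1))"

definition blk_off :: "nat \<Rightarrow> nat \<Rightarrow> nat \<Rightarrow> nat" where
  "blk_off d k i = (if k \<le> i \<and> i < k + d then i - k else 0)"

definition blk_start :: "nat \<Rightarrow> nat \<Rightarrow> nat \<Rightarrow> nat" where
  "blk_start d k j = (if j \<le> k then j else j + (d - 1))"

text \<open>(sigma) varsigma^n_k : maps B^(k)_j onto B^(sigma k)_(sigma j), order preserving.\<close>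
definition clone_perm :: "nat \<Rightarrow> nat \<Rightarrow> nat \<Rightarrow> (nat \<Rightarrow> nat) \<Rightarrow> nat \<Rightarrow> nat" where
  "clone_perm d n k \<sigma> i =
     (if i \<in> {1..n + d - 1}
      then blk_start d (\<sigma> k) (\<sigma> (blk d k i)) + blk_off d k i
      else i)"

text \<open>G n is the group G_n, rho n : G_n -> S_n, kappa n k is the cloning map kappa^n_k
  (applied to group elements as ordinary functions; the paper writes them on the right).\<close>
definition cloning_system ::
  "nat \<Rightarrow> (nat \<Rightarrow> 'g monoid) \<Rightarrow> (nat \<Rightarrow> 'g \<Rightarrow> nat \<Rightarrow> nat) \<Rightarrow> (nat \<Rightarrow> nat \<Rightarrow> 'g \<Rightarrow> 'g) \<Rightarrow> bool"
where
  "cloning_system d G rho kappa \<longleftrightarrow>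
     (\<forall>n\<ge>1. group (G n))
   \<and> (\<forall>n\<ge>1. rho n \<in> hom (G n) (sym_group n))
   \<and> (\<forall>n\<ge>1. \<forall>k\<in>{1..n}.
          kappa n k \<in> carrier (G n) \<rightarrow> carrier (G (n + d - 1))
        \<and> inj_on (kappa n k) (carrier (G n)))
   \<and> (\<forall>n\<ge>1. \<forall>k\<in>{1..n}. \<forall>g\<in>carrier (G n). \<forall>h\<in>carrier (G n).
          kappa n k (g \<otimes>\<^bsub>G n\<^esub> h)
            = kappa n (rho n h k) g \<otimes>\<^bsub>G (n + d - 1)\<^esub> kappa n k h)
   \<and> (\<forall>n\<ge>1. \<forall>k l. 1 \<le> k \<and> k < l \<and> l \<le> n \<longrightarrow>
        (\<forall>g\<in>carrier (G n).
          kappa (n + d - 1) k (kappa n l g) = kappa (n + d - 1) (l + d - 1) (kappa n k g)))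
   \<and> (\<forall>n\<ge>1. \<forall>k\<in>{1..n}. \<forall>g\<in>carrier (G n). \<forall>i\<in>{1..n + d - 1}.
        i \<notin> {k..k + d - 1} \<longrightarrow>
          rho (n + d - 1) (kappa n k g) i = clone_perm d n k (rho n g) i)"

definition diverse_from ::
  "nat \<Rightarrow> (nat \<Rightarrow> 'g monoid) \<Rightarrow> (nat \<Rightarrow> nat \<Rightarrow> 'g \<Rightarrow> 'g) \<Rightarrow> nat \<Rightarrow> bool" where
  "diverse_from d G kappa n0 \<longleftrightarrow>
     (\<forall>n\<ge>n0. (\<Inter>k\<in>{1..n}. kappa n k ` carrier (G n)) = {\<one>\<^bsub>G (n + d - 1)\<^esub>})"

definition diverse ::
  "nat \<Rightarrow> (nat \<Rightarrow> 'g monoid) \<Rightarrow> (nat \<Rightarrow> nat \<Rightarrow> 'g \<Rightarrow> 'g) \<Rightarrow> bool" where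
  "diverse d G kappa \<longleftrightarrow> (\<exists>n0. diverse_from d G kappa n0)"

definition valid_triple :: "nat \<Rightarrow> (nat \<Rightarrow> 'g monoid) \<Rightarrow> tree \<times> 'g \<times> tree \<Rightarrow> bool" where
  "valid_triple d G t = (case t of (T, g, U) \<Rightarrow>
     dary d T \<and> dary d U \<and> leaves T = leaves U \<and> g \<in> carrier (G (leaves T)))"

definition expansion ::
  "nat \<Rightarrow> (nat \<Rightarrow> 'g monoid) \<Rightarrow> (nat \<Rightarrow> 'g \<Rightarrow> nat \<Rightarrow> nat) \<Rightarrow> (nat \<Rightarrow> nat \<Rightarrow> 'g \<Rightarrow> 'g)
   \<Rightarrow> ((tree \<times> 'g \<times> tree) \<times> (tree \<times> 'g \<times> tree)) set" where
  "expansion d G rho kappa =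
     {((T, g, U), (add_caret d (rho (leaves T) g k) T, kappa (leaves T) k g, add_caret d k U)) |
        T g U k. valid_triple d G (T, g, U) \<and> 1 \<le> k \<and> k \<le> leaves T}"

definition tclass ::
  "nat \<Rightarrow> (nat \<Rightarrow> 'g monoid) \<Rightarrow> (nat \<Rightarrow> 'g \<Rightarrow> nat \<Rightarrow> nat) \<Rightarrow> (nat \<Rightarrow> nat \<Rightarrow> 'g \<Rightarrow> 'g)
   \<Rightarrow> tree \<times> 'g \<times> tree \<Rightarrow> (tree \<times> 'g \<times> tree) set" where
  "tclass d G rho kappa t =
     {s. (t, s) \<in> (expansion d G rho kappa \<union> (expansion d G rho kappa)\<inverse>)\<^sup>*}"

definition Tgroup ::
  "nat \<Rightarrow> (nat \<Rightarrow> 'g monoid) \<Rightarrow> (nat \<Rightarrow> 'g \<Rightarrow> nat \<Rightarrow> nat) \<Rightarrow> (nat \<Rightarrow> nat \<Rightarrow> 'g \<Rightarrow> 'g)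
   \<Rightarrow> (tree \<times> 'g \<times> tree) set set" where
  "Tgroup d G rho kappa = {tclass d G rho kappa t | t. valid_triple d G t}"

definition tmult ::
  "nat \<Rightarrow> (nat \<Rightarrow> 'g monoid) \<Rightarrow> (nat \<Rightarrow> 'g \<Rightarrow> nat \<Rightarrow> nat) \<Rightarrow> (nat \<Rightarrow> nat \<Rightarrow> 'g \<Rightarrow> 'g)
   \<Rightarrow> (tree \<times> 'g \<times> tree) set \<Rightarrow> (tree \<times> 'g \<times> tree) set \<Rightarrow> (tree \<times> 'g \<times> tree) set" where
  "tmult d G rho kappa x y =
     (SOME z. \<exists>T g U h W. (T, g, U) \<in> x \<and> (U, h, W) \<in> y \<and>
        z = tclass d G rho kappa (T, g \<otimes>\<^bsub>G (leaves T)\<^esub> h, W))"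

definition tinv ::
  "nat \<Rightarrow> (nat \<Rightarrow> 'g monoid) \<Rightarrow> (nat \<Rightarrow> 'g \<Rightarrow> nat \<Rightarrow> nat) \<Rightarrow> (nat \<Rightarrow> nat \<Rightarrow> 'g \<Rightarrow> 'g)
   \<Rightarrow> (tree \<times> 'g \<times> tree) set \<Rightarrow> (tree \<times> 'g \<times> tree) set" where
  "tinv d G rho kappa x =
     (SOME z. \<exists>T g U. (T, g, U) \<in> x \<and>
        z = tclass d G rho kappa (U, inv\<^bsub>G (leaves T)\<^esub> g, T))"

definition tree_pair ::
  "nat \<Rightarrow> (nat \<Rightarrow> 'g monoid) \<Rightarrow> (nat \<Rightarrow> 'g \<Rightarrow> nat \<Rightarrow> nat) \<Rightarrow> (nat \<Rightarrow> nat \<Rightarrow> 'g \<Rightarrow> 'g)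
   \<Rightarrow> tree \<Rightarrow> tree \<Rightarrow> (tree \<times> 'g \<times> tree) set" where
  "tree_pair d G rho kappa T U = tclass d G rho kappa (T, \<one>\<^bsub>G (leaves T)\<^esub>, U)"

definition Fd ::
  "nat \<Rightarrow> (nat \<Rightarrow> 'g monoid) \<Rightarrow> (nat \<Rightarrow> 'g \<Rightarrow> nat \<Rightarrow> nat) \<Rightarrow> (nat \<Rightarrow> nat \<Rightarrow> 'g \<Rightarrow> 'g)
   \<Rightarrow> (tree \<times> 'g \<times> tree) set set" where
  "Fd d G rho kappa = {tree_pair d G rho kappa T U | T U.
      dary d T \<and> dary d U \<and> leaves T = leaves U}"

end

theory Submission
  imports Defs "HOL-Library.Confluence"
begin

(* Represent x by a triple (A, g, B) with at least n0 leaves.  Expanding it at leaf k gives the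
   representative (A_(rho g k), kappa_k g, B_k) of x, so conjugating the tree pair
   [A_(rho g k), A_(rho g l)] by x yields [B_k, (kappa_k g)^-1 kappa_l g, B_l].  An element of F_d
   has trivial label in each of its representatives, hence all kappa_k g coincide; by diversity
   this common value is 1, and injectivity of kappa_1 gives g = 1, i.e. x = [A, B].

   Two expansions of a triple can always be completed to a common one,
   so expansion is confluent, and a sequence of expansions is determined by the right tree it
   produces; together these make the product independent of the chosen representatives. *)

lemma diamond_church_rosser:
  assumes diamond: "\<And>x y z. (x, y) \<in> r \<Longrightarrow> (x, z) \<in> r \<Longrightarrow> y = z \<or> (\<exists>u. (y, u) \<in> r \<and> (z, u) \<in> r)"
    and "(a, b) \<in> (r \<union> r\<inverse>)\<^sup>*"
  shows "\<exists>c. (a, c) \<in> r\<^sup>* \<and> (b, c) \<in> r\<^sup>*"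
proof -
  have "strong_confluentp (\<lambda>x y. (x, y) \<in> r)"
    by (rule strong_confluentpI) (use diamond in blast)
  then have "equivclp (\<lambda>x y. (x, y) \<in> r) = (\<lambda>x y. (x, y) \<in> r)\<^sup>*\<^sup>* OO (\<lambda>x y. (x, y) \<in> r)\<inverse>\<inverse>\<^sup>*\<^sup>*"
    by (intro semiconfluentp_equivclp strong_confluentp_into_semiconfluentp)
  moreover have "equivclp (\<lambda>x y. (x, y) \<in> r) a b"
  proof -
    have "r \<union> r\<inverse> = {(x, y). (x, y) \<in> r \<or> (y, x) \<in> r}" by auto
    with assms(2) show ?thesis
      unfolding equivclp_def symclp_pointfree by (simp add: rtranclp_rtrancl_eq sup_fun_def)
  qed
  ultimately show ?thesis
    by (auto simp: rtranclp_rtrancl_eq rtranclp_conversep)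
qed

section \<open>Carets and refinements of d-ary trees\<close>

lemma leaves_pos: "1 \<le> d \<Longrightarrow> dary d V \<Longrightarrow> 1 \<le> leaves V"
proof (induction V)
  case (Nd ts)
  then obtain t where "t \<in> set ts" by (cases ts) auto
  with Nd have "1 \<le> leaves t" by auto
  also have "leaves t \<le> sum_list (map leaves ts)"
    using \<open>t \<in> set ts\<close> by (simp add: member_le_sum_list)
  finally show ?case by simp
qed simp

lemma length_add_caret_list [simp]: "length (add_caret_list d k ts) = length ts"
  by (induction ts arbitrary: k) auto

lemma dary_add_caret_and_list:
  "dary d V \<Longrightarrow> dary d (add_caret d k V)"
  "\<forall>t\<in>set ts. dary d t \<Longrightarrow> \<forall>t\<in>set (add_caret_list d k ts). dary d t"
  by (induction d k V and d k ts rule: add_caret_add_caret_list.induct) auto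

lemmas dary_add_caret = dary_add_caret_and_list(1)

lemma leaves_add_caret_and_list:
  "1 \<le> k \<Longrightarrow> k \<le> leaves V \<Longrightarrow> leaves (add_caret d k V) = leaves V + d - 1"
  "1 \<le> k \<Longrightarrow> k \<le> sum_list (map leaves ts) \<Longrightarrow>
     sum_list (map leaves (add_caret_list d k ts)) = sum_list (map leaves ts) + d - 1"
  by (induction d k V and d k ts rule: add_caret_add_caret_list.induct)
    (auto simp: sum_list_replicate)

lemmas leaves_add_caret = leaves_add_caret_and_list(1)

lemma add_caret_commute_and_list:
  "1 \<le> k \<Longrightarrow> k < l \<Longrightarrow> l \<le> leaves V \<Longrightarrow>
     add_caret d (l + d - 1) (add_caret d k V) = add_caret d k (add_caret d l V)"
  "1 \<le> k \<Longrightarrow> k < l \<Longrightarrow> l \<le> sum_list (map leaves ts) \<Longrightarrow>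
     add_caret_list d (l + d - 1) (add_caret_list d k ts) = add_caret_list d k (add_caret_list d l ts)"
proof (induction d k V and d k ts arbitrary: l and l rule: add_caret_add_caret_list.induct)
  case (4 d k t ts)
  show ?case
  proof (cases "k \<le> leaves t")
    case True
    then show ?thesis using 4 by (auto simp: leaves_add_caret)
  next
    case False
    then show ?thesis using "4.IH"(2)[of "l - leaves t"] "4.prems" by auto
  qed
qed auto

text \<open>The position in \<^term>\<open>add_caret d k V\<close> of the leaf \<open>j \<noteq> k\<close> of \<open>V\<close>.\<close>
definition leaf_shift :: "nat \<Rightarrow> nat \<Rightarrow> nat \<Rightarrow> nat" where
  "leaf_shift d k j = (if j < k then j else j + d - 1)"

lemma add_caret_commute:
  assumes "1 \<le> k" "1 \<le> l" "k \<noteq> l" "k \<le> leaves V" "l \<le> leaves V"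
  shows "add_caret d (leaf_shift d k l) (add_caret d k V) = add_caret d (leaf_shift d l k) (add_caret d l V)"
  using add_caret_commute_and_list(1)[of k l V d] add_caret_commute_and_list(1)[of l k V d] assms
  by (cases "k < l") (auto simp: leaf_shift_def)

fun tree_refines :: "nat \<Rightarrow> tree \<Rightarrow> tree \<Rightarrow> bool" where
  "tree_refines d R Lf \<longleftrightarrow> dary d R"
| "tree_refines d Lf (Nd vs) \<longleftrightarrow> False"
| "tree_refines d (Nd rs) (Nd vs) \<longleftrightarrow> length vs = d \<and> list_all2 (tree_refines d) rs vs"

text \<open>The subtree of \<open>R\<close> growing out of the \<open>k\<close>-th leaf of \<open>V\<close>, when \<open>R\<close> refines \<open>V\<close>
  (\<^term>\<open>Lf\<close> when the shapes do not match).\<close>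
fun leaf_subtree :: "tree \<Rightarrow> tree \<Rightarrow> nat \<Rightarrow> tree"
and leaf_subtree_list :: "tree list \<Rightarrow> tree list \<Rightarrow> nat \<Rightarrow> tree" where
  "leaf_subtree R Lf k = R"
| "leaf_subtree Lf (Nd vs) k = Lf"
| "leaf_subtree (Nd rs) (Nd vs) k = leaf_subtree_list rs vs k"
| "leaf_subtree_list (r # rs) (v # vs) k =
     (if k \<le> leaves v then leaf_subtree r v k else leaf_subtree_list rs vs (k - leaves v))"
| "leaf_subtree_list [] vs k = Lf"
| "leaf_subtree_list (r # rs) [] k = Lf"

lemma tree_refines_dary: "tree_refines d R V \<Longrightarrow> dary d R \<and> dary d V"
proof (induction d R V rule: tree_refines.induct)
  case (3 d rs vs)
  then have len: "length rs = d" "length vs = d" and rel: "list_all2 (tree_refines d) rs vs"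
    by (auto dest: list_all2_lengthD)
  have "dary d (rs ! i) \<and> dary d (vs ! i)" if "i < d" for i
    using "3.IH"[OF nth_mem nth_mem] rel that len by (simp add: list_all2_conv_all_nth)
  with len show ?case by (auto simp: in_set_conv_nth)
qed auto

lemma tree_refines_refl: "dary d V \<Longrightarrow> tree_refines d V V"
  by (induction V) (auto intro: list.rel_refl_strong)

lemma tree_refines_trans: "tree_refines d A B \<Longrightarrow> tree_refines d B C \<Longrightarrow> tree_refines d A C"
proof (induction C arbitrary: A B)
  case Lf
  then show ?case using tree_refines_dary by auto
next
  case (Nd cs)
  then obtain bs where B: "B = Nd bs" by (cases B) auto
  with Nd.prems obtain as where A: "A = Nd as" by (cases A) auto
  from Nd.prems A B have "list_all2 (tree_refines d) as bs" "list_all2 (tree_refines d) bs cs"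
    "length cs = d"
    by auto
  with Nd.IH A show ?case
    by (auto simp: list_all2_conv_all_nth)
qed

lemma tree_refines_leaves_le: "1 \<le> d \<Longrightarrow> tree_refines d R V \<Longrightarrow> leaves V \<le> leaves R"
proof (induction d R V rule: tree_refines.induct)
  case (1 d R)
  then show ?case using leaves_pos by simp
next
  case (3 d rs vs)
  then have "list_all2 (\<lambda>r v. leaves v \<le> leaves r) rs vs"
    by (auto simp: list_all2_conv_all_nth)
  then show ?case
    by (induction rule: list_all2_induct) auto
qed simp

lemma tree_refines_add_caret_iff_and_list:
  "1 \<le> k \<Longrightarrow> k \<le> leaves V \<Longrightarrow>
     tree_refines d R (add_caret d k V) \<longleftrightarrow> tree_refines d R V \<and> leaf_subtree R V k \<noteq> Lf"
  "1 \<le> k \<Longrightarrow> k \<le> sum_list (map leaves vs) \<Longrightarrow>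
     list_all2 (tree_refines d) rs (add_caret_list d k vs) \<longleftrightarrow>
       list_all2 (tree_refines d) rs vs \<and> leaf_subtree_list rs vs k \<noteq> Lf"
proof (induction d k V and d k vs arbitrary: R and rs rule: add_caret_add_caret_list.induct)
  case (1 d k)
  then show ?case
    by (cases R) (auto simp: list_all2_conv_all_nth all_set_conv_all_nth)
next
  case (2 d k ts)
  then show ?case by (cases R) auto
next
  case (4 d k v vs)
  then show ?case by (cases rs) auto
qed simp

lemmas tree_refines_add_caret_iff = tree_refines_add_caret_iff_and_list(1)

lemma leaf_subtree_add_caret_and_list:
  "1 \<le> d \<Longrightarrow> 1 \<le> k \<Longrightarrow> 1 \<le> l \<Longrightarrow> l \<noteq> k \<Longrightarrow> k \<le> leaves V \<Longrightarrow> l \<le> leaves V \<Longrightarrow>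
     leaf_subtree R (add_caret d k V) (leaf_shift d k l) = leaf_subtree R V l"
  "1 \<le> d \<Longrightarrow> 1 \<le> k \<Longrightarrow> 1 \<le> l \<Longrightarrow> l \<noteq> k \<Longrightarrow> k \<le> sum_list (map leaves vs) \<Longrightarrow>
     l \<le> sum_list (map leaves vs) \<Longrightarrow>
     leaf_subtree_list rs (add_caret_list d k vs) (leaf_shift d k l) = leaf_subtree_list rs vs l"
proof (induction d k V and d k vs arbitrary: R l and rs l rule: add_caret_add_caret_list.induct)
  case (2 d k ts)
  then show ?case by (cases R) auto
next
  case (4 d k v vs)
  show ?case
  proof (cases rs)
    case (Cons r rs')
    show ?thesis
    proof (cases "k \<le> leaves v")
      case True
      then show ?thesis
        using "4.IH"(1)[of l r] "4.prems" Cons by (auto simp: leaves_add_caret leaf_shift_def)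
    next
      case k: False
      show ?thesis
      proof (cases "l \<le> leaves v")
        case False
        have "leaf_shift d k l - leaves v = leaf_shift d (k - leaves v) (l - leaves v)"
          "\<not> leaf_shift d k l \<le> leaves v"
          using k False "4.prems" by (auto simp: leaf_shift_def)
        then show ?thesis
          using "4.IH"(2)[of "l - leaves v" rs'] "4.prems" k False Cons by auto
      qed (use k "4.prems" Cons in \<open>auto simp: leaf_shift_def\<close>)
    qed
  qed simp
qed (auto simp: leaf_shift_def)

lemmas leaf_subtree_add_caret = leaf_subtree_add_caret_and_list(1)

lemma tree_refines_expanded_leaf:
  "tree_refines d R V \<Longrightarrow> R \<noteq> V \<Longrightarrow> \<exists>k. 1 \<le> k \<and> k \<le> leaves V \<and> leaf_subtree R V k \<noteq> Lf"
proof (induction d R V rule: tree_refines.induct)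
  case (3 d rs vs)
  from "3.prems" have "list_all2 (tree_refines d) rs vs" "rs \<noteq> vs" by auto
  then have "\<exists>k. 1 \<le> k \<and> k \<le> sum_list (map leaves vs) \<and> leaf_subtree_list rs vs k \<noteq> Lf"
    using "3.IH"
  proof (induction rule: list_all2_induct)
    case (Cons r rs v vs)
    show ?case
    proof (cases "r = v")
      case True
      then obtain k where "1 \<le> k" "k \<le> sum_list (map leaves vs)" "leaf_subtree_list rs vs k \<noteq> Lf"
        using Cons by auto
      then show ?thesis by (intro exI[of _ "k + leaves v"]) auto
    next
      case False
      then show ?thesis using Cons.prems(2)[of r v] Cons.hyps by force
    qed
  qed simp
  then show ?case by simp
qed auto

lemma add_caret_tree_refines:
  "dary d V \<Longrightarrow> 1 \<le> k \<Longrightarrow> k \<le> leaves V \<Longrightarrow> tree_refines d (add_caret d k V) V"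
  using tree_refines_add_caret_iff tree_refines_refl dary_add_caret by blast

lemma tree_refines_add_caret_add_caret:
  assumes "1 \<le> d" "1 \<le> k" "1 \<le> l" "k \<noteq> l" "k \<le> leaves V" "l \<le> leaves V"
    and "tree_refines d R (add_caret d k V)" "tree_refines d R (add_caret d l V)"
  shows "tree_refines d R (add_caret d (leaf_shift d k l) (add_caret d k V))"
proof -
  have "leaf_subtree R (add_caret d k V) (leaf_shift d k l) = leaf_subtree R V l"
    using leaf_subtree_add_caret assms(1-6) by simp
  also have "\<dots> \<noteq> Lf"
    using tree_refines_add_caret_iff assms(3,6,8) by simp
  finally show ?thesis
    using tree_refines_add_caret_iff[of "leaf_shift d k l" "add_caret d k V"] assms
    by (auto simp: leaves_add_caret leaf_shift_def)
qed

section \<open>Cloning systems\<close>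

locale dary_cloning_system =
  fixes d :: nat and G :: "nat \<Rightarrow> 'g monoid" and rho :: "nat \<Rightarrow> 'g \<Rightarrow> nat \<Rightarrow> nat"
    and kappa :: "nat \<Rightarrow> nat \<Rightarrow> 'g \<Rightarrow> 'g"
  assumes two_le_d: "2 \<le> d" and cloning: "cloning_system d G rho kappa"
begin

lemma one_le_d: "1 \<le> d"
  using two_le_d by simp

lemma group_G: "1 \<le> n \<Longrightarrow> group (G n)"
  using cloning unfolding cloning_system_def by simp

lemma rho_hom: "1 \<le> n \<Longrightarrow> rho n \<in> hom (G n) (sym_group n)"
  using cloning unfolding cloning_system_def by simp

lemma kappa_closed:
  assumes "1 \<le> k" "k \<le> n" "g \<in> carrier (G n)"
  shows "kappa n k g \<in> carrier (G (n + d - 1))"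
proof -
  have "kappa n k \<in> carrier (G n) \<rightarrow> carrier (G (n + d - 1))"
    using cloning assms unfolding cloning_system_def by simp
  with assms show ?thesis by blast
qed

lemma kappa_inj_on: "1 \<le> k \<Longrightarrow> k \<le> n \<Longrightarrow> inj_on (kappa n k) (carrier (G n))"
  using cloning unfolding cloning_system_def by simp

lemma kappa_mult:
  "1 \<le> k \<Longrightarrow> k \<le> n \<Longrightarrow> g \<in> carrier (G n) \<Longrightarrow> h \<in> carrier (G n) \<Longrightarrow>
     kappa n k (g \<otimes>\<^bsub>G n\<^esub> h) = kappa n (rho n h k) g \<otimes>\<^bsub>G (n + d - 1)\<^esub> kappa n k h"
  using cloning unfolding cloning_system_def by simp

lemma rho_kappa:
  "1 \<le> k \<Longrightarrow> k \<le> n \<Longrightarrow> g \<in> carrier (G n) \<Longrightarrow> 1 \<le> i \<Longrightarrow> i \<le> n + d - 1 \<Longrightarrow>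
     \<not> (k \<le> i \<and> i \<le> k + d - 1) \<Longrightarrow> rho (n + d - 1) (kappa n k g) i = clone_perm d n k (rho n g) i"
  using cloning unfolding cloning_system_def by simp

lemma rho_permutes: "1 \<le> n \<Longrightarrow> g \<in> carrier (G n) \<Longrightarrow> rho n g permutes {1..n}"
  using rho_hom[of n] by (auto simp: hom_def sym_group_carrier)

lemma rho_in_range:
  "1 \<le> k \<Longrightarrow> k \<le> n \<Longrightarrow> g \<in> carrier (G n) \<Longrightarrow> 1 \<le> rho n g k \<and> rho n g k \<le> n"
  using permutes_in_image[OF rho_permutes, of n g k] by auto

lemma rho_mult:
  "1 \<le> n \<Longrightarrow> g \<in> carrier (G n) \<Longrightarrow> h \<in> carrier (G n) \<Longrightarrow>
     rho n (g \<otimes>\<^bsub>G n\<^esub> h) = rho n g \<circ> rho n h"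
  using hom_mult[OF rho_hom] by (simp add: sym_group_mult)

lemma rho_one: "1 \<le> n \<Longrightarrow> rho n \<one>\<^bsub>G n\<^esub> = id"
  using hom_one[OF rho_hom group_G sym_group_is_group] by (simp add: sym_group_one)

lemma kappa_kappa_commute:
  assumes "1 \<le> k" "1 \<le> l" "k \<noteq> l" "k \<le> n" "l \<le> n" "g \<in> carrier (G n)"
  shows "kappa (n + d - 1) (leaf_shift d l k) (kappa n l g) =
    kappa (n + d - 1) (leaf_shift d k l) (kappa n k g)"
proof -
  have "kappa (n + d - 1) k' (kappa n l' g) = kappa (n + d - 1) (l' + d - 1) (kappa n k' g)"
    if "1 \<le> k'" "k' < l'" "l' \<le> n" for k' l'
    using cloning assms(6) that unfolding cloning_system_def by simp
  then show ?thesis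
    using assms by (cases "k < l") (auto simp: leaf_shift_def)
qed

lemma rho_kappa_leaf_shift:
  assumes "1 \<le> k" "k \<le> n" "1 \<le> j" "j \<le> n" "j \<noteq> k" "g \<in> carrier (G n)"
  shows "rho (n + d - 1) (kappa n k g) (leaf_shift d k j) = leaf_shift d (rho n g k) (rho n g j)"
proof -
  have "rho n g j \<noteq> rho n g k"
    using permutes_inj[OF rho_permutes, of n g] assms by (auto dest: injD)
  moreover have "rho (n + d - 1) (kappa n k g) (leaf_shift d k j) =
      clone_perm d n k (rho n g) (leaf_shift d k j)"
    by (rule rho_kappa) (use assms one_le_d in \<open>auto simp: leaf_shift_def\<close>)
  moreover have "blk d k (leaf_shift d k j) = j" "blk_off d k (leaf_shift d k j) = 0"
    "leaf_shift d k j \<in> {1..n + d - 1}"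
    using assms one_le_d by (auto simp: blk_def blk_off_def leaf_shift_def)
  ultimately show ?thesis
    using one_le_d by (auto simp: clone_perm_def blk_start_def leaf_shift_def)
qed

lemma kappa_one: "1 \<le> k \<Longrightarrow> k \<le> n \<Longrightarrow> kappa n k \<one>\<^bsub>G n\<^esub> = \<one>\<^bsub>G (n + d - 1)\<^esub>"
proof -
  assume k: "1 \<le> k" "k \<le> n"
  interpret Gn: group "G n" using group_G k by simp
  interpret Gm: group "G (n + d - 1)" using group_G k one_le_d by simp
  have "kappa n k \<one>\<^bsub>G n\<^esub> \<otimes>\<^bsub>G (n + d - 1)\<^esub> kappa n k \<one>\<^bsub>G n\<^esub> = kappa n k \<one>\<^bsub>G n\<^esub>"
    using kappa_mult[OF k, of "\<one>\<^bsub>G n\<^esub>" "\<one>\<^bsub>G n\<^esub>"] rho_one k by simp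
  then show ?thesis
    using kappa_closed[OF k Gn.one_closed] by (metis Gm.l_cancel_one')
qed

lemma rho_inv_rho:
  assumes "1 \<le> k" "k \<le> n" "g \<in> carrier (G n)"
  shows "rho n (inv\<^bsub>G n\<^esub> g) (rho n g k) = k"
proof -
  interpret group "G n" using group_G assms by simp
  have "rho n (inv\<^bsub>G n\<^esub> g) (rho n g k) = rho n (inv\<^bsub>G n\<^esub> g \<otimes>\<^bsub>G n\<^esub> g) k"
    using rho_mult[of n "inv\<^bsub>G n\<^esub> g" g] assms by simp
  also have "\<dots> = k"
    using rho_one assms by simp
  finally show ?thesis .
qed

lemma kappa_inv:
  assumes k: "1 \<le> k" "k \<le> n" and g: "g \<in> carrier (G n)"
  shows "inv\<^bsub>G (n + d - 1)\<^esub> (kappa n k g) = kappa n (rho n g k) (inv\<^bsub>G n\<^esub> g)"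
proof -
  interpret Gn: group "G n" using group_G k by simp
  interpret Gm: group "G (n + d - 1)" using group_G k one_le_d by simp
  have "kappa n (rho n g k) (inv\<^bsub>G n\<^esub> g) \<otimes>\<^bsub>G (n + d - 1)\<^esub> kappa n k g = \<one>\<^bsub>G (n + d - 1)\<^esub>"
    using kappa_mult[OF k, of "inv\<^bsub>G n\<^esub> g" g] kappa_one[OF k] rho_inv_rho[OF k g] g by simp
  then show ?thesis
    using Gm.inv_equality kappa_closed k g rho_in_range by (metis Gn.inv_closed)
qed

section \<open>Expansions of triples\<close>

abbreviation ltree :: "tree \<times> 'g \<times> tree \<Rightarrow> tree" where "ltree t \<equiv> fst t"
abbreviation label :: "tree \<times> 'g \<times> tree \<Rightarrow> 'g" where "label t \<equiv> fst (snd t)"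
abbreviation rtree :: "tree \<times> 'g \<times> tree \<Rightarrow> tree" where "rtree t \<equiv> snd (snd t)"

abbreviation valid :: "tree \<times> 'g \<times> tree \<Rightarrow> bool" where
  "valid \<equiv> valid_triple d G"

abbreviation Exp :: "((tree \<times> 'g \<times> tree) \<times> (tree \<times> 'g \<times> tree)) set" where
  "Exp \<equiv> expansion d G rho kappa"

abbreviation Exp_equiv :: "((tree \<times> 'g \<times> tree) \<times> (tree \<times> 'g \<times> tree)) set" where
  "Exp_equiv \<equiv> (Exp \<union> Exp\<inverse>)\<^sup>*"

definition expand :: "tree \<times> 'g \<times> tree \<Rightarrow> nat \<Rightarrow> tree \<times> 'g \<times> tree" where
  "expand t k = (case t of (T, g, U) \<Rightarrow>
     (add_caret d (rho (leaves T) g k) T, kappa (leaves T) k g, add_caret d k U))"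

lemma expand_simp [simp]:
  "expand (T, g, U) k = (add_caret d (rho (leaves T) g k) T, kappa (leaves T) k g, add_caret d k U)"
  by (simp add: expand_def)

lemma rtree_expand [simp]: "rtree (expand t k) = add_caret d k (rtree t)"
  by (cases t) simp

lemma Exp_iff: "(t, s) \<in> Exp \<longleftrightarrow> valid t \<and> (\<exists>k. 1 \<le> k \<and> k \<le> leaves (ltree t) \<and> s = expand t k)"
  unfolding expansion_def by (cases t) auto

lemma Exp_expand: "valid t \<Longrightarrow> 1 \<le> k \<Longrightarrow> k \<le> leaves (ltree t) \<Longrightarrow> (t, expand t k) \<in> Exp"
  unfolding Exp_iff by blast

lemma valid_leaves:
  "valid t \<Longrightarrow> leaves (rtree t) = leaves (ltree t) \<and> 1 \<le> leaves (ltree t)"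
  using leaves_pos one_le_d by (auto simp: valid_triple_def split: prod.splits)

lemma valid_expand:
  assumes "valid t" "1 \<le> k" "k \<le> leaves (ltree t)"
  shows "valid (expand t k)" "leaves (ltree (expand t k)) = leaves (ltree t) + d - 1"
proof -
  obtain T g U where t: "t = (T, g, U)" by (cases t)
  with assms have "dary d T" "dary d U" "leaves U = leaves T" "g \<in> carrier (G (leaves T))"
    by (auto simp: valid_triple_def)
  moreover have "1 \<le> rho (leaves T) g k \<and> rho (leaves T) g k \<le> leaves T"
    using rho_in_range assms t calculation by simp
  ultimately show "valid (expand t k)" "leaves (ltree (expand t k)) = leaves (ltree t) + d - 1"
    using assms t kappa_closed by (auto simp: valid_triple_def dary_add_caret leaves_add_caret)
qed

lemma Exp_validD: "(t, s) \<in> Exp \<Longrightarrow> valid t \<and> valid s"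
  unfolding Exp_iff using valid_expand by blast

lemma Exp_leaves:
  assumes "(t, s) \<in> Exp"
  shows "leaves (ltree s) = leaves (ltree t) + d - 1" "leaves (rtree s) = leaves (rtree t) + d - 1"
  using assms valid_expand valid_leaves unfolding Exp_iff by metis+

lemma Exp_rtree_refines: "(t, s) \<in> Exp \<Longrightarrow> tree_refines d (rtree s) (rtree t)"
  unfolding Exp_iff valid_triple_def by (clarsimp simp: add_caret_tree_refines)

lemma Exp_equiv_valid: "(t, s) \<in> Exp_equiv \<Longrightarrow> valid t \<Longrightarrow> valid s"
  by (induction rule: rtrancl_induct) (auto dest: Exp_validD)

lemma Exp_rtrancl_Exp_equiv: "(t, s) \<in> Exp\<^sup>* \<Longrightarrow> (t, s) \<in> Exp_equiv"
  using rtrancl_mono[of Exp "Exp \<union> Exp\<inverse>"] by blast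

lemma Exp_rtrancl_refines: "(t, s) \<in> Exp\<^sup>* \<Longrightarrow> valid t \<Longrightarrow> tree_refines d (rtree s) (rtree t)"
proof (induction rule: rtrancl_induct)
  case base
  then show ?case by (auto simp: valid_triple_def tree_refines_refl split: prod.splits)
next
  case (step s s')
  then show ?case using Exp_rtree_refines tree_refines_trans by blast
qed

lemma Exp_rtrancl_leaves_less:
  assumes "(t, s) \<in> Exp" "(s, u) \<in> Exp\<^sup>*"
  shows "leaves (rtree t) < leaves (rtree u)"
proof -
  have "leaves (rtree s) \<le> leaves (rtree u)"
    using Exp_rtrancl_refines assms Exp_validD tree_refines_leaves_le one_le_d by blast
  then show ?thesis
    using Exp_leaves(2)[OF assms(1)] two_le_d by simp
qed

lemma expand_expand_commute:
  assumes "valid t" "1 \<le> k" "1 \<le> l" "k \<noteq> l" "k \<le> leaves (ltree t)" "l \<le> leaves (ltree t)"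
  shows "expand (expand t k) (leaf_shift d k l) = expand (expand t l) (leaf_shift d l k)"
proof -
  obtain T g U where t: "t = (T, g, U)" by (cases t)
  define n where "n = leaves T"
  from assms t have T: "dary d T" "leaves U = n" "g \<in> carrier (G n)"
    by (auto simp: valid_triple_def n_def)
  have kl: "1 \<le> k" "1 \<le> l" "k \<noteq> l" "k \<le> n" "l \<le> n"
    using assms t n_def by auto
  have "rho n g k \<noteq> rho n g l"
    using permutes_inj[OF rho_permutes, of n g] kl T by (auto dest: injD)
  moreover have "1 \<le> rho n g k \<and> rho n g k \<le> n" "1 \<le> rho n g l \<and> rho n g l \<le> n"
    using rho_in_range kl T by auto
  ultimately show ?thesis
    using t T kl add_caret_commute[of "rho n g k" "rho n g l" T d] add_caret_commute[of k l U d]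
      kappa_kappa_commute[of k l n g] rho_kappa_leaf_shift[of k n l g] rho_kappa_leaf_shift[of l n k g]
    by (simp add: leaves_add_caret n_def[symmetric])
qed

lemma expand_diamond:
  assumes "valid t" "1 \<le> k" "1 \<le> l" "k \<noteq> l" "k \<le> leaves (ltree t)" "l \<le> leaves (ltree t)"
  shows "(expand t k, expand (expand t k) (leaf_shift d k l)) \<in> Exp"
    and "(expand t l, expand (expand t k) (leaf_shift d k l)) \<in> Exp"
proof -
  have v: "valid (expand t k)" "valid (expand t l)"
    using valid_expand assms by auto
  have shift: "1 \<le> leaf_shift d k l" "leaf_shift d k l \<le> leaves (ltree (expand t k))"
    "1 \<le> leaf_shift d l k" "leaf_shift d l k \<le> leaves (ltree (expand t l))"
    using assms valid_expand one_le_d by (auto simp: leaf_shift_def)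
  show "(expand t k, expand (expand t k) (leaf_shift d k l)) \<in> Exp"
    using Exp_expand v shift by simp
  show "(expand t l, expand (expand t k) (leaf_shift d k l)) \<in> Exp"
    unfolding expand_expand_commute[OF assms] using Exp_expand v shift by simp
qed

lemma Exp_church_rosser: "(a, b) \<in> Exp_equiv \<Longrightarrow> \<exists>c. (a, c) \<in> Exp\<^sup>* \<and> (b, c) \<in> Exp\<^sup>*"
proof (rule diamond_church_rosser)
  fix t s1 s2
  assume "(t, s1) \<in> Exp" "(t, s2) \<in> Exp"
  then obtain k l where "valid t" "1 \<le> k" "k \<le> leaves (ltree t)" "s1 = expand t k"
    "1 \<le> l" "l \<le> leaves (ltree t)" "s2 = expand t l"
    unfolding Exp_iff by blast
  then show "s1 = s2 \<or> (\<exists>u. (s1, u) \<in> Exp \<and> (s2, u) \<in> Exp)"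
    using expand_diamond by (cases "k = l") blast+
qed

lemma Exp_rtrancl_to_refinement:
  assumes "valid t" "tree_refines d R (rtree t)"
  shows "\<exists>s. (t, s) \<in> Exp\<^sup>* \<and> rtree s = R"
  using assms
proof (induction "leaves R - leaves (rtree t)" arbitrary: t rule: less_induct)
  case less
  show ?case
  proof (cases "R = rtree t")
    case False
    then obtain k where k: "1 \<le> k" "k \<le> leaves (rtree t)" "leaf_subtree R (rtree t) k \<noteq> Lf"
      using tree_refines_expanded_leaf less.prems(2) by blast
    have E: "(t, expand t k) \<in> Exp"
      using Exp_expand less.prems(1) k valid_leaves by simp
    have R: "tree_refines d R (rtree (expand t k))"
      using tree_refines_add_caret_iff k less.prems(2) by simp
    then have "leaves (rtree (expand t k)) \<le> leaves R"
      using tree_refines_leaves_le one_le_d by blast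
    then have "leaves R - leaves (rtree (expand t k)) < leaves R - leaves (rtree t)"
      using Exp_leaves(2)[OF E] two_le_d by simp
    then obtain s where "(expand t k, s) \<in> Exp\<^sup>*" "rtree s = R"
      using less.hyps Exp_validD[OF E] R by blast
    with E show ?thesis by (blast intro: converse_rtrancl_into_rtrancl)
  qed blast
qed

lemma Exp_rtrancl_first_step:
  "(t, s) \<in> Exp\<^sup>* \<Longrightarrow> s \<noteq> t \<Longrightarrow> \<exists>k. 1 \<le> k \<and> k \<le> leaves (ltree t) \<and> (expand t k, s) \<in> Exp\<^sup>*"
  by (metis Exp_iff converse_rtranclE)

lemma Exp_rtrancl_rtree_eq:
  assumes "(t, s) \<in> Exp\<^sup>*" "valid t" "rtree s = rtree t"
  shows "s = t"
proof (rule ccontr)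
  assume "s \<noteq> t"
  then obtain k where "1 \<le> k" "k \<le> leaves (ltree t)" "(expand t k, s) \<in> Exp\<^sup>*"
    using Exp_rtrancl_first_step assms(1) by blast
  then have "leaves (rtree t) < leaves (rtree s)"
    using Exp_rtrancl_leaves_less Exp_expand assms(2) by blast
  with assms(3) show False by simp
qed

lemma Exp_rtrancl_diamond_refinement:
  assumes "valid t" "1 \<le> k" "1 \<le> l" "k \<noteq> l" "k \<le> leaves (ltree t)" "l \<le> leaves (ltree t)"
    and "(expand t k, t1) \<in> Exp\<^sup>*" "(expand t l, t2) \<in> Exp\<^sup>*" "rtree t1 = rtree t2"
  shows "\<exists>t'. (expand t k, t') \<in> Exp\<^sup>* \<and> (expand t l, t') \<in> Exp\<^sup>* \<and> rtree t' = rtree t1"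
proof -
  define u where "u = expand (expand t k) (leaf_shift d k l)"
  have Eu: "(expand t k, u) \<in> Exp" "(expand t l, u) \<in> Exp"
    unfolding u_def using expand_diamond assms(1-6) by auto
  have "tree_refines d (rtree t1) (add_caret d k (rtree t))"
    using Exp_rtrancl_refines[OF assms(7)] Exp_validD[OF Eu(1)] by simp
  moreover have "tree_refines d (rtree t1) (add_caret d l (rtree t))"
    using Exp_rtrancl_refines[OF assms(8)] Exp_validD[OF Eu(2)] assms(9) by simp
  ultimately have "tree_refines d (rtree t1) (rtree u)"
    unfolding u_def using tree_refines_add_caret_add_caret one_le_d assms(2-6)
      valid_leaves[OF assms(1)] by simp
  then obtain t' where "(u, t') \<in> Exp\<^sup>*" "rtree t' = rtree t1"
    using Exp_rtrancl_to_refinement Exp_validD Eu(1) by blast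
  with Eu show ?thesis
    by (blast intro: converse_rtrancl_into_rtrancl)
qed

text \<open>Induction on the number of leaves still to be added; when the first steps differ, both
  sequences are compared with one passing through the common expansion of these steps.\<close>
lemma Exp_rtrancl_unique:
  assumes "valid t" "(t, t1) \<in> Exp\<^sup>*" "(t, t2) \<in> Exp\<^sup>*" "rtree t1 = rtree t2"
  shows "t1 = t2"
  using assms
proof (induction "leaves (rtree t1) - leaves (rtree t)" arbitrary: t t1 t2 rule: less_induct)
  case less
  have IH: "s1 = s2"
    if "(t, s) \<in> Exp" "(s, s1) \<in> Exp\<^sup>*" "(s, s2) \<in> Exp\<^sup>*" "rtree s1 = rtree s2"
      "rtree s1 = rtree t1" for s s1 s2
  proof -
    have "leaves (rtree s1) - leaves (rtree s) < leaves (rtree t1) - leaves (rtree t)"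
      using Exp_rtrancl_leaves_less[OF that(1,2)] Exp_leaves(2)[OF that(1)] two_le_d that(5) by simp
    then show ?thesis
      using less.hyps Exp_validD that(1-4) by blast
  qed
  show ?case
  proof (cases "t1 = t \<or> t2 = t")
    case True
    then show ?thesis
      using Exp_rtrancl_rtree_eq less.prems by metis
  next
    case False
    then obtain k where k: "1 \<le> k" "k \<le> leaves (ltree t)" "(expand t k, t1) \<in> Exp\<^sup>*"
      using Exp_rtrancl_first_step less.prems(2) by blast
    from False obtain l where l: "1 \<le> l" "l \<le> leaves (ltree t)" "(expand t l, t2) \<in> Exp\<^sup>*"
      using Exp_rtrancl_first_step less.prems(3) by blast
    have Ek: "(t, expand t k) \<in> Exp" and El: "(t, expand t l) \<in> Exp"
      using Exp_expand less.prems(1) k l by auto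
    show ?thesis
    proof (cases "k = l")
      case True
      then show ?thesis using IH[OF Ek k(3) _ less.prems(4) refl] l(3) by simp
    next
      case False
      obtain t' where t': "(expand t k, t') \<in> Exp\<^sup>*" "(expand t l, t') \<in> Exp\<^sup>*" "rtree t' = rtree t1"
        using Exp_rtrancl_diamond_refinement[OF less.prems(1) k(1) l(1) False k(2) l(2) k(3) l(3)
            less.prems(4)]
        by blast
      have "t1 = t'"
        using IH[OF Ek k(3) t'(1)] t'(3) by simp
      moreover have "t2 = t'"
        using t'(3) less.prems(4) by (intro IH[OF El l(3) t'(2)]) simp_all
      ultimately show ?thesis by simp
    qed
  qed
qed

section \<open>Products and inverses of representatives\<close>

lemma Exp_equiv_sym: "(a, b) \<in> Exp_equiv \<Longrightarrow> (b, a) \<in> Exp_equiv"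
  using symD[OF sym_rtrancl[OF sym_Un_converse]] .

definition triple_mult :: "tree \<times> 'g \<times> tree \<Rightarrow> tree \<times> 'g \<times> tree \<Rightarrow> tree \<times> 'g \<times> tree" where
  "triple_mult a b = (ltree a, label a \<otimes>\<^bsub>G (leaves (ltree a))\<^esub> label b, rtree b)"

definition triple_inv :: "tree \<times> 'g \<times> tree \<Rightarrow> tree \<times> 'g \<times> tree" where
  "triple_inv t = (rtree t, inv\<^bsub>G (leaves (ltree t))\<^esub> (label t), ltree t)"

lemma valid_triple_mult:
  assumes "valid a" "valid b" "rtree a = ltree b"
  shows "valid (triple_mult a b)"
proof -
  obtain T g U h W where ab: "a = (T, g, U)" "b = (U, h, W)"
    using assms(3) by (cases a, cases b) auto
  with assms have V: "dary d T" "dary d W" "leaves T = leaves W"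
    "g \<in> carrier (G (leaves T))" "h \<in> carrier (G (leaves T))"
    by (auto simp: valid_triple_def)
  interpret group "G (leaves T)"
    using group_G valid_leaves assms(1) ab by fastforce
  have "g \<otimes>\<^bsub>G (leaves T)\<^esub> h \<in> carrier (G (leaves T))"
    using V(4,5) by simp
  with V ab show ?thesis
    unfolding triple_mult_def valid_triple_def by simp
qed

lemma valid_triple_inv:
  assumes "valid t"
  shows "valid (triple_inv t)"
proof -
  obtain T g U where t: "t = (T, g, U)" by (cases t)
  with assms have V: "dary d T" "dary d U" "leaves T = leaves U" "g \<in> carrier (G (leaves T))"
    by (auto simp: valid_triple_def)
  interpret group "G (leaves T)"
    using group_G valid_leaves assms t by fastforce
  have "inv\<^bsub>G (leaves T)\<^esub> g \<in> carrier (G (leaves T))"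
    using V(4) by simp
  with V t show ?thesis
    unfolding triple_inv_def valid_triple_def by simp
qed

lemma expand_triple_mult:
  assumes "valid (T, g, U)" "valid (U, h, W)" "1 \<le> k" "k \<le> leaves U"
  shows "triple_mult (expand (T, g, U) (rho (leaves U) h k)) (expand (U, h, W) k) =
    expand (T, g \<otimes>\<^bsub>G (leaves T)\<^esub> h, W) k"
proof -
  define n where "n = leaves T"
  from assms have gh: "g \<in> carrier (G n)" "h \<in> carrier (G n)" "leaves U = n"
    by (auto simp: valid_triple_def n_def)
  have "1 \<le> rho n h k \<and> rho n h k \<le> n"
    using rho_in_range assms gh by auto
  then have "leaves (add_caret d (rho n g (rho n h k)) T) = n + d - 1"
    using rho_in_range gh leaves_add_caret n_def by simp
  moreover have "rho n (g \<otimes>\<^bsub>G n\<^esub> h) k = rho n g (rho n h k)"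
    using rho_mult gh assms by simp
  moreover have "kappa n k (g \<otimes>\<^bsub>G n\<^esub> h) =
      kappa n (rho n h k) g \<otimes>\<^bsub>G (n + d - 1)\<^esub> kappa n k h"
    using kappa_mult gh assms by simp
  ultimately show ?thesis
    unfolding triple_mult_def using gh by (simp add: n_def[symmetric])
qed

lemma Exp_triple_mult_left_step:
  assumes "(a, a') \<in> Exp" "valid b" "rtree a = ltree b"
  shows "\<exists>b'. (b, b') \<in> Exp \<and> rtree a' = ltree b' \<and> (triple_mult a b, triple_mult a' b') \<in> Exp"
proof -
  obtain T g U h W where a: "a = (T, g, U)" and b: "b = (U, h, W)"
    using assms(3) by (cases a, cases b) auto
  define n where "n = leaves U"
  obtain j where j: "1 \<le> j" "j \<le> n" "a' = expand a j" and va: "valid a"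
    using assms(1) a unfolding Exp_iff by (auto simp: valid_triple_def n_def)
  have h: "h \<in> carrier (G n)" and lT: "leaves T = n"
    using va assms(2) a b by (auto simp: valid_triple_def n_def)
  then have "j \<in> rho n h ` {1..n}"
    using permutes_image[OF rho_permutes] j by auto
  then obtain k where k: "1 \<le> k" "k \<le> n" "rho n h k = j" by auto
  have "triple_mult a' (expand b k) = expand (triple_mult a b) k"
  proof -
    have "a' = expand (T, g, U) (rho (leaves U) h k)" "triple_mult a b = (T, g \<otimes>\<^bsub>G (leaves T)\<^esub> h, W)"
      using j k a b n_def by (simp_all add: triple_mult_def)
    with expand_triple_mult[of T g U h W k] va assms(2) a b k n_def show ?thesis by simp
  qed
  moreover have "(triple_mult a b, expand (triple_mult a b) k) \<in> Exp"
    by (rule Exp_expand[OF valid_triple_mult[OF va assms(2,3)] k(1)])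
      (use k a lT in \<open>simp add: triple_mult_def\<close>)
  moreover have "(b, expand b k) \<in> Exp"
    by (rule Exp_expand[OF assms(2) k(1)]) (use k b n_def in simp)
  ultimately show ?thesis
    using j k a b n_def by (intro exI[of _ "expand b k"]) auto
qed

lemma Exp_triple_mult_right_step:
  assumes "(b, b') \<in> Exp" "valid a" "rtree a = ltree b"
  shows "\<exists>a'. (a, a') \<in> Exp \<and> rtree a' = ltree b' \<and> (triple_mult a b, triple_mult a' b') \<in> Exp"
proof -
  obtain T g U h W where a: "a = (T, g, U)" and b: "b = (U, h, W)"
    using assms(3) by (cases a, cases b) auto
  define n where "n = leaves U"
  obtain k where k: "1 \<le> k" "k \<le> n" "b' = expand b k" and vb: "valid b"
    using assms(1) b unfolding Exp_iff by (auto simp: n_def)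
  have h: "h \<in> carrier (G n)" and lT: "leaves T = n"
    using vb assms(2) a b by (auto simp: valid_triple_def n_def)
  then have j: "1 \<le> rho n h k" "rho n h k \<le> n"
    using rho_in_range k by auto
  have "triple_mult (expand a (rho n h k)) b' = expand (triple_mult a b) k"
  proof -
    have "triple_mult a b = (T, g \<otimes>\<^bsub>G (leaves T)\<^esub> h, W)"
      using a b by (simp add: triple_mult_def)
    with expand_triple_mult[of T g U h W k] assms(2) vb a b k n_def show ?thesis by simp
  qed
  moreover have "(triple_mult a b, expand (triple_mult a b) k) \<in> Exp"
    by (rule Exp_expand[OF valid_triple_mult[OF assms(2) vb assms(3)] k(1)])
      (use k a lT in \<open>simp add: triple_mult_def\<close>)
  moreover have "(a, expand a (rho n h k)) \<in> Exp"
    by (rule Exp_expand[OF assms(2) j(1)]) (use j a lT in simp)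
  ultimately show ?thesis
    using j k a b n_def by (intro exI[of _ "expand a (rho n h k)"]) auto
qed

lemma Exp_rtrancl_valid: "(t, s) \<in> Exp\<^sup>* \<Longrightarrow> valid t \<Longrightarrow> valid s"
  using Exp_equiv_valid Exp_rtrancl_Exp_equiv by blast

lemma Exp_rtrancl_triple_mult_left:
  assumes "(a, a') \<in> Exp\<^sup>*" "valid a" "valid b" "rtree a = ltree b"
  shows "\<exists>b'. (b, b') \<in> Exp\<^sup>* \<and> rtree a' = ltree b' \<and> (triple_mult a b, triple_mult a' b') \<in> Exp\<^sup>*"
  using assms(1)
proof (induction rule: rtrancl_induct)
  case (step a' a'')
  then obtain b' where b': "(b, b') \<in> Exp\<^sup>*" "rtree a' = ltree b'"
    "(triple_mult a b, triple_mult a' b') \<in> Exp\<^sup>*"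
    by blast
  obtain b'' where "(b', b'') \<in> Exp" "rtree a'' = ltree b''"
    "(triple_mult a' b', triple_mult a'' b'') \<in> Exp"
    using Exp_triple_mult_left_step[OF step(2) Exp_rtrancl_valid[OF b'(1) assms(3)] b'(2)] by blast
  with b' show ?case by (meson rtrancl.rtrancl_into_rtrancl)
qed (use assms in blast)

lemma Exp_rtrancl_triple_mult_right:
  assumes "(b, b') \<in> Exp\<^sup>*" "valid a" "valid b" "rtree a = ltree b"
  shows "\<exists>a'. (a, a') \<in> Exp\<^sup>* \<and> rtree a' = ltree b' \<and> (triple_mult a b, triple_mult a' b') \<in> Exp\<^sup>*"
  using assms(1)
proof (induction rule: rtrancl_induct)
  case (step b' b'')
  then obtain a' where a': "(a, a') \<in> Exp\<^sup>*" "rtree a' = ltree b'"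
    "(triple_mult a b, triple_mult a' b') \<in> Exp\<^sup>*"
    by blast
  obtain a'' where "(a', a'') \<in> Exp" "rtree a'' = ltree b''"
    "(triple_mult a' b', triple_mult a'' b'') \<in> Exp"
    using Exp_triple_mult_right_step[OF step(2) Exp_rtrancl_valid[OF a'(1) assms(2)] a'(2)] by blast
  with a' show ?case by (meson rtrancl.rtrancl_into_rtrancl)
qed (use assms in blast)

text \<open>Join \<open>a\<close> and \<open>a'\<close> in \<open>c\<close> and carry \<open>b\<close>, \<open>b'\<close> along; join the results in \<open>f\<close> and carry
  \<open>c\<close> back along both ways: the two outcomes agree since they end in the same
  right tree.\<close>
lemma Exp_equiv_triple_mult:
  assumes "valid a" "valid b" "rtree a = ltree b" "rtree a' = ltree b'"
    and "(a, a') \<in> Exp_equiv" "(b, b') \<in> Exp_equiv"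
  shows "(triple_mult a b, triple_mult a' b') \<in> Exp_equiv"
proof -
  have va': "valid a'" and vb': "valid b'"
    using Exp_equiv_valid assms by blast+
  obtain c where c: "(a, c) \<in> Exp\<^sup>*" "(a', c) \<in> Exp\<^sup>*"
    using Exp_church_rosser assms(5) by blast
  obtain e where e: "(b, e) \<in> Exp\<^sup>*" "rtree c = ltree e" "(triple_mult a b, triple_mult c e) \<in> Exp\<^sup>*"
    using Exp_rtrancl_triple_mult_left[OF c(1) assms(1-3)] by blast
  obtain e' where e': "(b', e') \<in> Exp\<^sup>*" "rtree c = ltree e'"
    "(triple_mult a' b', triple_mult c e') \<in> Exp\<^sup>*"
    using Exp_rtrancl_triple_mult_left[OF c(2) va' vb' assms(4)] by blast
  have "(e, e') \<in> Exp_equiv"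
    using Exp_equiv_sym[OF Exp_rtrancl_Exp_equiv[OF e(1)]] assms(6) Exp_rtrancl_Exp_equiv[OF e'(1)]
    by (meson rtrancl_trans)
  then obtain f where f: "(e, f) \<in> Exp\<^sup>*" "(e', f) \<in> Exp\<^sup>*"
    using Exp_church_rosser by blast
  have vc: "valid c" and ve: "valid e" "valid e'"
    using Exp_rtrancl_valid c(1) e(1) e'(1) assms(1,2) vb' by blast+
  obtain c1 where c1: "(c, c1) \<in> Exp\<^sup>*" "rtree c1 = ltree f"
    "(triple_mult c e, triple_mult c1 f) \<in> Exp\<^sup>*"
    using Exp_rtrancl_triple_mult_right[OF f(1) vc ve(1) e(2)] by blast
  obtain c1' where c1': "(c, c1') \<in> Exp\<^sup>*" "rtree c1' = ltree f"
    "(triple_mult c e', triple_mult c1' f) \<in> Exp\<^sup>*"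
    using Exp_rtrancl_triple_mult_right[OF f(2) vc ve(2) e'(2)] by blast
  have "c1 = c1'"
    using Exp_rtrancl_unique[OF vc c1(1) c1'(1)] c1(2) c1'(2) by simp
  then have "(triple_mult c e, triple_mult c e') \<in> Exp_equiv"
    using Exp_rtrancl_Exp_equiv[OF c1(3)] Exp_equiv_sym[OF Exp_rtrancl_Exp_equiv[OF c1'(3)]]
    by (meson rtrancl_trans)
  then show ?thesis
    using Exp_rtrancl_Exp_equiv[OF e(3)] Exp_equiv_sym[OF Exp_rtrancl_Exp_equiv[OF e'(3)]]
    by (meson rtrancl_trans)
qed

lemma Exp_triple_inv:
  assumes "(t, s) \<in> Exp"
  shows "(triple_inv t, triple_inv s) \<in> Exp"
proof -
  obtain k where vt: "valid t" and k: "1 \<le> k" "k \<le> leaves (ltree t)" and s: "s = expand t k"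
    using assms unfolding Exp_iff by blast
  obtain T g U where t: "t = (T, g, U)" by (cases t)
  define n where "n = leaves T"
  have V: "g \<in> carrier (G n)" "leaves U = n" "k \<le> n"
    using vt t k by (auto simp: valid_triple_def n_def)
  define j where "j = rho n g k"
  have j: "1 \<le> j" "j \<le> n"
    using rho_in_range k V j_def by auto
  have "triple_inv s = expand (triple_inv t) j"
    using s t V k j leaves_add_caret[of j T d] kappa_inv[of k n g] rho_inv_rho[of k n g]
    by (simp add: triple_inv_def n_def[symmetric] j_def[symmetric])
  moreover have "(triple_inv t, expand (triple_inv t) j) \<in> Exp"
    by (rule Exp_expand[OF valid_triple_inv[OF vt] j(1)]) (use t V j in \<open>simp add: triple_inv_def\<close>)
  ultimately show ?thesis by simp
qed

lemma Exp_equiv_triple_inv: "(a, b) \<in> Exp_equiv \<Longrightarrow> (triple_inv a, triple_inv b) \<in> Exp_equiv"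
proof (induction rule: rtrancl_induct)
  case (step b c)
  then have "(triple_inv b, triple_inv c) \<in> Exp \<union> Exp\<inverse>"
    using Exp_triple_inv by blast
  with step.IH show ?case by (rule rtrancl.rtrancl_into_rtrancl)
qed simp

lemma mem_tclass_iff: "s \<in> tclass d G rho kappa t \<longleftrightarrow> (t, s) \<in> Exp_equiv"
  by (simp add: tclass_def)

lemma tclass_eqI: "(a, b) \<in> Exp_equiv \<Longrightarrow> tclass d G rho kappa a = tclass d G rho kappa b"
  unfolding tclass_def using Exp_equiv_sym by (blast intro: rtrancl_trans)

lemma tmult_tclass:
  assumes "valid a" "valid b" "a' \<in> tclass d G rho kappa a" "b' \<in> tclass d G rho kappa b"
    and "rtree a' = ltree b'"
  shows "tmult d G rho kappa (tclass d G rho kappa a) (tclass d G rho kappa b) =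
    tclass d G rho kappa (triple_mult a' b')"
  unfolding tmult_def
proof (rule some_equality)
  show "\<exists>T g U h W. (T, g, U) \<in> tclass d G rho kappa a \<and> (U, h, W) \<in> tclass d G rho kappa b \<and>
      tclass d G rho kappa (triple_mult a' b') = tclass d G rho kappa (T, g \<otimes>\<^bsub>G (leaves T)\<^esub> h, W)"
  proof -
    obtain T g U h W where "a' = (T, g, U)" "b' = (U, h, W)"
      using assms(5) by (cases a', cases b') auto
    with assms(3,4) show ?thesis
      unfolding triple_mult_def by (intro exI[of _ T] exI[of _ g] exI[of _ U] exI[of _ h] exI[of _ W]) simp
  qed
next
  fix z
  assume "\<exists>T g U h W. (T, g, U) \<in> tclass d G rho kappa a \<and> (U, h, W) \<in> tclass d G rho kappa b \<and>
      z = tclass d G rho kappa (T, g \<otimes>\<^bsub>G (leaves T)\<^esub> h, W)"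
  then obtain T g U h W where TU: "(T, g, U) \<in> tclass d G rho kappa a" "(U, h, W) \<in> tclass d G rho kappa b"
    and z: "z = tclass d G rho kappa (triple_mult (T, g, U) (U, h, W))"
    by (auto simp: triple_mult_def)
  have "(a', (T, g, U)) \<in> Exp_equiv" "(b', (U, h, W)) \<in> Exp_equiv"
    using assms(3,4) TU Exp_equiv_sym unfolding mem_tclass_iff by (meson rtrancl_trans)+
  moreover have "valid a'" "valid b'"
    using assms Exp_equiv_valid unfolding mem_tclass_iff by blast+
  ultimately have "(triple_mult a' b', triple_mult (T, g, U) (U, h, W)) \<in> Exp_equiv"
    using Exp_equiv_triple_mult[of a' b' "(T, g, U)" "(U, h, W)"] assms(5) by simp
  with z show "z = tclass d G rho kappa (triple_mult a' b')"
    using tclass_eqI by simp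
qed

lemma tinv_tclass:
  assumes "valid t"
  shows "tinv d G rho kappa (tclass d G rho kappa t) = tclass d G rho kappa (triple_inv t)"
  unfolding tinv_def
proof (rule some_equality)
  show "\<exists>T g U. (T, g, U) \<in> tclass d G rho kappa t \<and>
      tclass d G rho kappa (triple_inv t) = tclass d G rho kappa (U, inv\<^bsub>G (leaves T)\<^esub> g, T)"
    by (cases t) (auto simp: triple_inv_def mem_tclass_iff)
next
  fix z
  assume "\<exists>T g U. (T, g, U) \<in> tclass d G rho kappa t \<and>
      z = tclass d G rho kappa (U, inv\<^bsub>G (leaves T)\<^esub> g, T)"
  then obtain T g U where "(t, (T, g, U)) \<in> Exp_equiv"
    and z: "z = tclass d G rho kappa (triple_inv (T, g, U))"
    by (auto simp: triple_inv_def mem_tclass_iff)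
  then show "z = tclass d G rho kappa (triple_inv t)"
    using Exp_equiv_triple_inv Exp_equiv_sym tclass_eqI by metis
qed

lemma Exp_label_one_iff:
  assumes "(t, s) \<in> Exp"
  shows "label s = \<one>\<^bsub>G (leaves (ltree s))\<^esub> \<longleftrightarrow> label t = \<one>\<^bsub>G (leaves (ltree t))\<^esub>"
proof -
  obtain k where vt: "valid t" and k: "1 \<le> k" "k \<le> leaves (ltree t)" and s: "s = expand t k"
    using assms unfolding Exp_iff by blast
  obtain T g U where t: "t = (T, g, U)" by (cases t)
  define n where "n = leaves T"
  have g: "g \<in> carrier (G n)" and kn: "k \<le> n"
    using vt t k by (auto simp: valid_triple_def n_def)
  interpret group "G n" using group_G k kn by simp
  have "label s = kappa n k g" "leaves (ltree s) = n + d - 1"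
    using s t valid_expand(2)[OF vt k] by (simp_all add: n_def)
  moreover have "kappa n k g = kappa n k \<one>\<^bsub>G n\<^esub> \<longleftrightarrow> g = \<one>\<^bsub>G n\<^esub>"
    using inj_on_eq_iff[OF kappa_inj_on[OF k(1) kn] g] by simp
  ultimately show ?thesis
    using kappa_one[OF k(1) kn] t n_def by simp
qed

lemma Exp_equiv_label_one:
  "(a, b) \<in> Exp_equiv \<Longrightarrow> label a = \<one>\<^bsub>G (leaves (ltree a))\<^esub> \<Longrightarrow> label b = \<one>\<^bsub>G (leaves (ltree b))\<^esub>"
proof (induction rule: rtrancl_induct)
  case (step b c)
  from step.hyps(2) consider "(b, c) \<in> Exp" | "(c, b) \<in> Exp" by blast
  then show ?case using Exp_label_one_iff step.IH step.prems by cases metis+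
qed

lemma label_one_if_tclass_in_Fd:
  assumes "tclass d G rho kappa c \<in> Fd d G rho kappa"
  shows "label c = \<one>\<^bsub>G (leaves (ltree c))\<^esub>"
proof -
  obtain V W where "tclass d G rho kappa c = tclass d G rho kappa (V, \<one>\<^bsub>G (leaves V)\<^esub>, W)"
    using assms unfolding Fd_def tree_pair_def by blast
  moreover have "c \<in> tclass d G rho kappa c"
    by (simp add: mem_tclass_iff)
  ultimately have "((V, \<one>\<^bsub>G (leaves V)\<^esub>, W), c) \<in> Exp_equiv"
    by (simp add: mem_tclass_iff)
  then show ?thesis
    using Exp_equiv_label_one by fastforce
qed

lemma Exp_rtrancl_leaves_ge: "valid t \<Longrightarrow> \<exists>s. (t, s) \<in> Exp\<^sup>* \<and> m \<le> leaves (ltree s)"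
proof (induction m)
  case (Suc m)
  then obtain s where s: "(t, s) \<in> Exp\<^sup>*" "m \<le> leaves (ltree s)" by blast
  then have E: "(s, expand s 1) \<in> Exp"
    using Exp_expand Exp_rtrancl_valid valid_leaves Suc.prems by blast
  then have "Suc m \<le> leaves (ltree (expand s 1))"
    using Exp_leaves(1)[OF E] s(2) two_le_d by simp
  with s(1) E show ?case by (blast intro: rtrancl.rtrancl_into_rtrancl)
qed blast

section \<open>Conjugates of tree pairs\<close>

lemma tinv_tclass_mult_tree_pair:
  assumes "valid t" "(t, s) \<in> Exp_equiv" "dary d U" "leaves U = leaves (ltree s)"
  shows "tmult d G rho kappa (tinv d G rho kappa (tclass d G rho kappa t))
      (tree_pair d G rho kappa (ltree s) U) =
    tclass d G rho kappa (rtree s, inv\<^bsub>G (leaves (ltree s))\<^esub> (label s), U)"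
proof -
  obtain T h V where s: "s = (T, h, V)" by (cases s)
  have vs: "valid s"
    using Exp_equiv_valid assms(1,2) by blast
  with s have V: "dary d T" "leaves V = leaves T" "h \<in> carrier (G (leaves T))"
    by (auto simp: valid_triple_def)
  interpret group "G (leaves T)"
    using group_G valid_leaves[OF vs] s by simp
  have v1: "valid (T, \<one>\<^bsub>G (leaves T)\<^esub>, U)"
    using V assms(3,4) s by (simp add: valid_triple_def)
  have "tmult d G rho kappa (tclass d G rho kappa (triple_inv t))
      (tclass d G rho kappa (T, \<one>\<^bsub>G (leaves T)\<^esub>, U)) =
    tclass d G rho kappa (triple_mult (triple_inv s) (T, \<one>\<^bsub>G (leaves T)\<^esub>, U))"
  proof (rule tmult_tclass[OF valid_triple_inv[OF assms(1)] v1])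
    show "triple_inv s \<in> tclass d G rho kappa (triple_inv t)"
      using Exp_equiv_triple_inv[OF assms(2)] by (simp add: mem_tclass_iff)
  qed (simp_all add: mem_tclass_iff triple_inv_def s)
  moreover have "triple_mult (triple_inv s) (T, \<one>\<^bsub>G (leaves T)\<^esub>, U) =
      (V, inv\<^bsub>G (leaves T)\<^esub> h, U)"
    using V s by (simp add: triple_mult_def triple_inv_def)
  ultimately show ?thesis
    using tinv_tclass[OF assms(1)] s by (simp add: tree_pair_def)
qed

lemma conj_tree_pair_tclass:
  assumes "valid (A, g, B)" "1 \<le> k" "k \<le> leaves A" "1 \<le> l" "l \<le> leaves A"
  shows "tmult d G rho kappa
      (tmult d G rho kappa (tinv d G rho kappa (tclass d G rho kappa (A, g, B)))
        (tree_pair d G rho kappa (add_caret d (rho (leaves A) g k) A) (add_caret d (rho (leaves A) g l) A)))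
      (tclass d G rho kappa (A, g, B)) =
    tclass d G rho kappa (add_caret d k B,
      inv\<^bsub>G (leaves A + d - 1)\<^esub> (kappa (leaves A) k g) \<otimes>\<^bsub>G (leaves A + d - 1)\<^esub> kappa (leaves A) l g,
      add_caret d l B)"
    (is "?lhs = tclass d G rho kappa (_, ?h, _)")
proof -
  define t where "t = (A, g, B)"
  define m where "m = leaves A + d - 1"
  define U where "U = add_caret d (rho (leaves A) g l) A"
  define p where "p = (add_caret d k B, inv\<^bsub>G m\<^esub> (kappa (leaves A) k g), U)"
  have vt: "valid t" and k: "1 \<le> k" "k \<le> leaves (ltree t)" and l: "1 \<le> l" "l \<le> leaves (ltree t)"
    using assms by (simp_all add: t_def)
  have Ek: "(t, expand t k) \<in> Exp" and El: "(t, expand t l) \<in> Exp"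
    using Exp_expand vt k l by auto
  have lk: "leaves (ltree (expand t k)) = m" and ll: "leaves (ltree (expand t l)) = m"
    using valid_expand(2)[OF vt k] valid_expand(2)[OF vt l] by (simp_all add: t_def m_def)
  have vk: "valid (expand t k)" and vl: "valid (expand t l)"
    using Exp_validD Ek El by auto
  then have "dary d U" "leaves U = m"
    using ll by (auto simp: valid_triple_def t_def U_def)
  then have first: "tmult d G rho kappa (tinv d G rho kappa (tclass d G rho kappa t))
      (tree_pair d G rho kappa (ltree (expand t k)) U) = tclass d G rho kappa p"
    using tinv_tclass_mult_tree_pair[OF vt _ \<open>dary d U\<close>, of "expand t k"] Ek lk
    by (auto simp: p_def t_def)
  interpret group "G m"
    using group_G two_le_d by (simp add: m_def)
  have "kappa (leaves A) k g \<in> carrier (G m)"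
    using vk lk by (auto simp: valid_triple_def t_def)
  then have vp: "valid p"
    using vk vl lk ll valid_leaves[OF vk] by (auto simp: valid_triple_def p_def t_def U_def)
  have second: "tmult d G rho kappa (tclass d G rho kappa p) (tclass d G rho kappa t) =
      tclass d G rho kappa (triple_mult p (expand t l))"
    by (rule tmult_tclass[OF vp vt]) (use El in \<open>auto simp: mem_tclass_iff p_def t_def U_def\<close>)
  have "?lhs = tmult d G rho kappa (tmult d G rho kappa (tinv d G rho kappa (tclass d G rho kappa t))
      (tree_pair d G rho kappa (ltree (expand t k)) U)) (tclass d G rho kappa t)"
    by (simp add: t_def U_def)
  also have "\<dots> = tclass d G rho kappa (triple_mult p (expand t l))"
    using first second by simp
  also have "\<dots> = tclass d G rho kappa (add_caret d k B, ?h, add_caret d l B)"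
    using valid_leaves[OF vk] lk by (simp add: triple_mult_def p_def t_def m_def)
  finally show ?thesis .
qed

lemma kappa_eq_if_conj_tree_pairs_in_Fd:
  assumes "valid (A, g, B)" "1 \<le> k" "k \<le> leaves A" "1 \<le> l" "l \<le> leaves A" "N \<le> leaves A"
    and "\<forall>T U. dary d T \<and> dary d U \<and> leaves T = leaves U \<and> leaves T \<ge> N \<longrightarrow>
      tmult d G rho kappa (tmult d G rho kappa (tinv d G rho kappa (tclass d G rho kappa (A, g, B)))
        (tree_pair d G rho kappa T U)) (tclass d G rho kappa (A, g, B)) \<in> Fd d G rho kappa"
  shows "kappa (leaves A) k g = kappa (leaves A) l g"
proof -
  define m where "m = leaves A + d - 1"
  have vk: "valid (expand (A, g, B) k)" and vl: "valid (expand (A, g, B) l)"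
    using valid_expand(1)[OF assms(1) assms(2)] valid_expand(1)[OF assms(1) assms(4)] assms(3,5)
    by simp_all
  interpret group "G m"
    using group_G two_le_d by (simp add: m_def)
  have lk: "leaves (add_caret d (rho (leaves A) g k) A) = m"
    and ll: "leaves (add_caret d (rho (leaves A) g l) A) = m"
    using valid_expand(2)[OF assms(1)] assms(2-5) by (simp_all add: m_def)
  have "dary d (add_caret d (rho (leaves A) g k) A)" "dary d (add_caret d (rho (leaves A) g l) A)"
    "leaves (add_caret d (rho (leaves A) g k) A) = leaves (add_caret d (rho (leaves A) g l) A)"
    "N \<le> leaves (add_caret d (rho (leaves A) g k) A)"
    using vk vl lk ll one_le_d assms(6) by (auto simp: valid_triple_def m_def)
  with assms(7) have "tclass d G rho kappa (add_caret d k B,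
      inv\<^bsub>G m\<^esub> (kappa (leaves A) k g) \<otimes>\<^bsub>G m\<^esub> kappa (leaves A) l g, add_caret d l B) \<in> Fd d G rho kappa"
    unfolding m_def conj_tree_pair_tclass[OF assms(1-5), symmetric] by blast
  moreover have "leaves (add_caret d k B) = m"
    using valid_leaves[OF vk] lk by simp
  ultimately have "inv\<^bsub>G m\<^esub> (kappa (leaves A) k g) \<otimes>\<^bsub>G m\<^esub> kappa (leaves A) l g = \<one>\<^bsub>G m\<^esub>"
    using label_one_if_tclass_in_Fd by fastforce
  moreover have "kappa (leaves A) k g \<in> carrier (G m)" "kappa (leaves A) l g \<in> carrier (G m)"
    using vk vl lk ll by (auto simp: valid_triple_def)
  ultimately show ?thesis
    by (metis inv_solve_left' one_closed r_one)
qed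

lemma Tgroup_large_representative:
  assumes "x \<in> Tgroup d G rho kappa"
  obtains A g B where "valid (A, g, B)" "N \<le> leaves A" "x = tclass d G rho kappa (A, g, B)"
proof -
  obtain t0 where t0: "valid t0" "x = tclass d G rho kappa t0"
    using assms unfolding Tgroup_def by blast
  then obtain t where t: "(t0, t) \<in> Exp\<^sup>*" "N \<le> leaves (ltree t)"
    using Exp_rtrancl_leaves_ge by blast
  have "valid t" "x = tclass d G rho kappa t"
    using Exp_rtrancl_valid[OF t(1) t0(1)] tclass_eqI[OF Exp_rtrancl_Exp_equiv[OF t(1)]] t0(2)
    by simp_all
  with t(2) show thesis
    using that by (cases t) auto
qed

lemma eq_one_if_kappa_constant:
  assumes "diverse_from d G kappa n0" "n0 \<le> n" "1 \<le> n" "g \<in> carrier (G n)"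
    and "\<And>k. 1 \<le> k \<Longrightarrow> k \<le> n \<Longrightarrow> kappa n k g = kappa n 1 g"
  shows "g = \<one>\<^bsub>G n\<^esub>"
proof -
  interpret group "G n" using group_G assms(3) by simp
  have "kappa n 1 g \<in> (\<Inter>k\<in>{1..n}. kappa n k ` carrier (G n))"
  proof
    fix k
    assume "k \<in> {1..n}"
    then have "kappa n 1 g = kappa n k g"
      using assms(5)[of k] by simp
    then show "kappa n 1 g \<in> kappa n k ` carrier (G n)"
      using assms(4) by (rule image_eqI)
  qed
  moreover have "(\<Inter>k\<in>{1..n}. kappa n k ` carrier (G n)) = {\<one>\<^bsub>G (n + d - 1)\<^esub>}"
    using assms(1,2) unfolding diverse_from_def by simp
  ultimately have "kappa n 1 g = \<one>\<^bsub>G (n + d - 1)\<^esub>"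
    by blast
  also have "\<dots> = kappa n 1 \<one>\<^bsub>G n\<^esub>"
    using kappa_one assms(3) by simp
  finally show ?thesis
    using inj_onD[OF kappa_inj_on[OF order_refl assms(3)]] assms(4) by simp
qed

end

theorem mainTheorem2:
  fixes d n0 :: nat
    and G :: "nat \<Rightarrow> 'g monoid"
    and rho :: "nat \<Rightarrow> 'g \<Rightarrow> nat \<Rightarrow> nat"
    and kappa :: "nat \<Rightarrow> nat \<Rightarrow> 'g \<Rightarrow> 'g"
    and x :: "(tree \<times> 'g \<times> tree) set"
  assumes "d \<ge> 2"
    and "cloning_system d G rho kappa"
    and "diverse d G kappa"
    and "diverse_from d G kappa n0"
    and "x \<in> Tgroup d G rho kappa"
    and "\<forall>T U. dary d T \<and> dary d U \<and> leaves T = leaves U \<and> leaves T \<ge> n0 \<longrightarrow>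
           tmult d G rho kappa
             (tmult d G rho kappa (tinv d G rho kappa x) (tree_pair d G rho kappa T U)) x
           \<in> Fd d G rho kappa"
  shows "x \<in> Fd d G rho kappa"
proof -
  \<comment> \<open>The hypothesis \<open>diverse d G kappa\<close> is implied by \<open>diverse_from d G kappa n0\<close>.\<close>
  interpret dary_cloning_system d G rho kappa
    using assms(1,2) by unfold_locales
  obtain A g B where t: "valid_triple d G (A, g, B)" "n0 \<le> leaves A"
    and x: "x = tclass d G rho kappa (A, g, B)"
    using Tgroup_large_representative[OF assms(5)] .
  have A: "1 \<le> leaves A" "g \<in> carrier (G (leaves A))"
    using valid_leaves[OF t(1)] t(1) by (auto simp: valid_triple_def)
  have "kappa (leaves A) k g = kappa (leaves A) 1 g" if "1 \<le> k" "k \<le> leaves A" for k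
    using kappa_eq_if_conj_tree_pairs_in_Fd[OF t(1) that order_refl A(1) t(2) assms(6)[unfolded x]] .
  then have "g = \<one>\<^bsub>G (leaves A)\<^esub>"
    using eq_one_if_kappa_constant[OF assms(4) t(2) A] by blast
  then have "x = tree_pair d G rho kappa A B"
    using x by (simp add: tree_pair_def)
  then show ?thesis
    using t(1) unfolding Fd_def valid_triple_def by auto
qed

end
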